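(* Let $w_1,w_2\in\mathcal T$ and let $\alpha\in F(x_1,x_2,y_1,y_2)$ be arbitrary. Then (1) $I(w_1)$ is finite; (2) $I(\alpha^{-1}w_1\alpha)=I(w_1)$; (3) $I(w_1w_2)\le I(w_1)+I(w_2)$.
   Context: Let $F_2^{(a)},F_2^{(b)},F_2^{(c)}$ be free groups on $a_1,a_2$; $b_1,b_2$; $c_1,c_2$, let $\psi\colon F_2^{(a)}\times F_2^{(b)}\times F_2^{(c)}\to\mathbb Z^2$ send $a_i,b_i,c_i\mapsto e_i$, and $K=\ker\psi$, generated by $x_i=a_ic_i^{-1}$, $y_i=b_ic_i^{-1}$. $\mathcal T\subseteq F(x_1,x_2,y_1,y_2)$ is the set of elements representing the identity of $K$. $\mathrm{Conf}_2(X)=\{(z_1,z_2)\in X^2:z_1\ne z_2\}$. For Gaussian integers $p_x,p_y$ put $\hat p_x=p_x-(\tfrac13+\tfrac13 i)$, $\hat p_y=p_y+(\tfrac13+\tfrac13i)$. For $w\in\mathcal T$ given by a word of length $\ell$, define $\gamma_x,\gamma_y\colon[0,1]\to\mathbb C$ with $\gamma_x(0)=\hat p_x$, $\gamma_y(0)=\hat p_y$, linear on each $[(k-1)/\ell,k/\ell]$: if the $k$-th letter is $x_1^\delta$ (resp. $x_2^\delta$), $\delta=\pm1$, $\gamma_x$ moves by $\delta$ (resp. $i\delta$) and $\gamma_y$ is constant; if it is $y_1^\delta$ (resp. $y_2^\delta$), $\gamma_y$ moves by $-\delta$ (resp. $-i\delta$) and $\gamma_x$ is constant. $(\gamma_x,\gamma_y)$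 is a loop in $\mathrm{Conf}_2(\mathbb C\setminus\{0\})$ based at $(\hat p_x,\hat p_y)$; $I_{p_x,p_y}(w)$ is its class in $\pi_1(\mathrm{Conf}_2(\mathbb C\setminus\{0\}),(\hat p_x,\hat p_y))$ (independent of the word; $I_{p_x,p_y}$ is a homomorphism on $\mathcal T$). The braid-invariant is $I(w)=\#\{(p_x,p_y)\in\mathbb Z[i]^2: I_{p_x,p_y}(w)\text{ is nontrivial}\}$. *)

theory Defs
  imports "HOL-Analysis.Analysis"
begin

datatype gen = X1 | X2 | Y1 | Y2

text \<open>A letter is a generator with an exponent: True means exponent +1, False means -1.
  Elements of a free group are represented by words (lists of letters).\<close>

type_synonym 'a letter = "'a \<times> bool"
type_synonym word = "gen letter list"

fun free_reduce :: "'a letter list \<Rightarrow> 'a letter list" where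
  "free_reduce [] = []"
| "free_reduce (x # xs) =
     (case free_reduce xs of
        [] \<Rightarrow> [x]
      | y # ys \<Rightarrow> (if fst y = fst x \<and> snd y \<noteq> snd x then ys else x # y # ys))"

definition word_inv :: "'a letter list \<Rightarrow> 'a letter list" where
  "word_inv w = rev (map (\<lambda>(g, b). (g, \<not> b)) w)"

text \<open>The homomorphism F(x1,x2,y1,y2) -> F2^(a) x F2^(b) x F2^(c) given by
  x_i |-> a_i c_i^{-1}, y_i |-> b_i c_i^{-1}; generators of each F2 indexed by 1,2.\<close>

fun gen_idx :: "gen \<Rightarrow> nat" where
  "gen_idx X1 = 1" | "gen_idx X2 = 2" | "gen_idx Y1 = 1" | "gen_idx Y2 = 2"

fun is_x :: "gen \<Rightarrow> bool" where
  "is_x X1 = True" | "is_x X2 = True" | "is_x Y1 = False" | "is_x Y2 = False"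

definition comp_a :: "word \<Rightarrow> nat letter list" where
  "comp_a w = map (\<lambda>(g, b). (gen_idx g, b)) (filter (\<lambda>(g, b). is_x g) w)"

definition comp_b :: "word \<Rightarrow> nat letter list" where
  "comp_b w = map (\<lambda>(g, b). (gen_idx g, b)) (filter (\<lambda>(g, b). \<not> is_x g) w)"

definition comp_c :: "word \<Rightarrow> nat letter list" where
  "comp_c w = map (\<lambda>(g, b). (gen_idx g, \<not> b)) w"

definition in_T :: "word \<Rightarrow> bool" where
  "in_T w \<longleftrightarrow> free_reduce (comp_a w) = [] \<and> free_reduce (comp_b w) = []
                 \<and> free_reduce (comp_c w) = []"

definition conf2 :: "complex set \<Rightarrow> (complex \<times> complex) set" where
  "conf2 X = {(z1, z2). z1 \<in> X \<and> z2 \<in> X \<and> z1 \<noteq> z2}"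

definition gauss_ints :: "complex set" where
  "gauss_ints = {z. Re z \<in> \<int> \<and> Im z \<in> \<int>}"

definition sgnb :: "bool \<Rightarrow> complex" where
  "sgnb b = (if b then 1 else -1)"

fun disp :: "gen letter \<Rightarrow> complex \<times> complex" where
  "disp (X1, b) = (sgnb b, 0)"
| "disp (X2, b) = (\<i> * sgnb b, 0)"
| "disp (Y1, b) = (0, - sgnb b)"
| "disp (Y2, b) = (0, - (\<i> * sgnb b))"

definition base_pt :: "complex \<Rightarrow> complex \<Rightarrow> complex \<times> complex" where
  "base_pt px py = (px - (1/3 + \<i>/3), py + (1/3 + \<i>/3))"

definition vertex :: "complex \<times> complex \<Rightarrow> word \<Rightarrow> nat \<Rightarrow> complex \<times> complex" where
  "vertex b w k = b + sum_list (map disp (take k w))"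

definition word_path :: "complex \<times> complex \<Rightarrow> word \<Rightarrow> real \<Rightarrow> complex \<times> complex" where
  "word_path b w t =
     (if w = [] then b
      else let l = length w;
               k = nat (min (int l - 1) (max 0 \<lfloor>t * real l\<rfloor>));
               s = t * real l - real k
           in vertex b w k + s *\<^sub>R disp (w ! k))"

definition I_nontrivial :: "complex \<Rightarrow> complex \<Rightarrow> word \<Rightarrow> bool" where
  "I_nontrivial px py w \<longleftrightarrow>
     \<not> homotopic_paths (conf2 (UNIV - {0})) (word_path (base_pt px py) w)
                        (\<lambda>_. base_pt px py)"

definition I_set :: "word \<Rightarrow> (complex \<times> complex) set" where
  "I_set w = {(px, py). px \<in> gauss_ints \<and> py \<in> gauss_ints \<and> I_nontrivial px py w}"

definition braid_inv :: "word \<Rightarrow> nat" where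
  "braid_inv w = card (I_set w)"

end

theory Submission
  imports Defs
begin

text \<open>
  For Gaussian integers \<open>p\<^sub>x, p\<^sub>y\<close> the first strand of the braid loop starts on the lattice
  \<open>\<int>[i] - (1 + i)/3\<close> and the second on \<open>\<int>[i] + (1 + i)/3\<close>; every letter moves one strand by a
  unit step, so the strands run along the grid lines through their own lattices and never meet
  each other or the puncture.  The projections of the loop to the first strand, to the second
  strand and to their difference are polygonal loops on such grids which spell, after deleting
  the trivial steps, the images of \<open>w\<close> in the three free factors.  These words are freely
  trivial, so the projected loops are null-homotopic in their grids.  If a strand starts
  farther than \<open>5 |w|\<close> from the origin, a straight-line homotopy in the configuration space
  either freezes one strand or lets the pair turn about its fixed midpoint, and the projected
  null-homotopies then contract the loop; so only finitely many base points give a nontrivial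
  braid.  The loop of \<open>\<alpha>\<^sup>-\<^sup>1 w \<alpha>\<close> at a base point is, up to homotopy, the loop of \<open>w\<close> at the
  base point shifted back by the displacement of \<open>\<alpha>\<close>, conjugated by the path of \<open>\<alpha>\<^sup>-\<^sup>1\<close>; and a
  product of two null-homotopic loops is null-homotopic.
\<close>

section \<open>Polygonal paths\<close>

fun polyline :: "'a::real_normed_vector \<Rightarrow> 'a list \<Rightarrow> real \<Rightarrow> 'a" where
  "polyline b [] = linepath b b"
| "polyline b (v # vs) = linepath b (b + v) +++ polyline (b + v) vs"

lemma pathstart_polyline [simp]: "pathstart (polyline b vs) = b"
  by (cases vs) simp_all

lemma path_polyline [simp]: "path (polyline b vs)"
  by (induction vs arbitrary: b) simp_all

lemma pathfinish_polyline [simp]: "pathfinish (polyline b vs) = b + sum_list vs"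
  by (induction vs arbitrary: b) (simp_all add: add.assoc)

lemma path_image_polyline_append:
  "path_image (polyline b (us @ vs)) = path_image (polyline b us) \<union> path_image (polyline (b + sum_list us) vs)"
proof (induction us arbitrary: b)
  case Nil
  show ?case using pathstart_in_path_image[of "polyline b vs"] by auto
next
  case (Cons u us)
  show ?case
    by (simp add: path_image_join Cons.IH add.assoc Un_assoc)
qed

lemma homotopic_paths_polyline_append:
  assumes "path_image (polyline b (us @ vs)) \<subseteq> S"
  shows "homotopic_paths S (polyline b (us @ vs)) (polyline b us +++ polyline (b + sum_list us) vs)"
  using assms
proof (induction us arbitrary: b)
  case Nil
  then show ?case
    using homotopic_paths_sym[OF homotopic_paths_lid[of "polyline b vs" S]] by (simp add: linepath_refl)
next
  case (Cons u us)
  let ?l = "linepath b (b + u)" and ?p = "polyline (b + u) us"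
    and ?q = "polyline (b + u + sum_list us) vs"
  have S: "closed_segment b (b + u) \<subseteq> S" "path_image ?p \<subseteq> S" "path_image ?q \<subseteq> S"
    using Cons.prems unfolding path_image_polyline_append
    by (auto simp: path_image_join add.assoc)
  have "homotopic_paths S (polyline (b + u) (us @ vs)) (?p +++ ?q)"
    using S by (intro Cons.IH) (simp add: path_image_polyline_append)
  then have "homotopic_paths S (?l +++ polyline (b + u) (us @ vs)) (?l +++ (?p +++ ?q))"
    using S by (intro homotopic_paths_join) auto
  also have "homotopic_paths S \<dots> ((?l +++ ?p) +++ ?q)"
    using S by (intro homotopic_paths_assoc) auto
  finally show ?case by (simp add: add.assoc)
qed

lemma polyline_compose_linear:
  assumes "bounded_linear L"
  shows "L \<circ> polyline b vs = polyline (L b) (map L vs)"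
  by (induction vs arbitrary: b)
    (simp_all add: path_compose_join bounded_linear_linepath'[OF assms] linear_add[OF bounded_linear.linear[OF assms]])

lemma path_image_polyline_subset_cball:
  assumes "\<And>v. v \<in> set vs \<Longrightarrow> norm v \<le> 1"
  shows "path_image (polyline b vs) \<subseteq> cball b (length vs)"
  using assms
proof (induction vs arbitrary: b)
  case (Cons v vs)
  have v: "norm v \<le> 1" using Cons.prems by simp
  have "closed_segment b (b + v) \<subseteq> cball b 1"
    using v by (intro closed_segment_subset) (auto simp: dist_norm)
  moreover have "cball (b + v) (length vs) \<subseteq> cball b (1 + length vs)"
  proof
    fix x assume "x \<in> cball (b + v) (length vs)"
    then have "norm ((b + v - x) - v) \<le> length vs + 1"
      using v norm_triangle_ineq4[of "b + v - x" v] by (simp add: dist_norm)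
    then show "x \<in> cball b (1 + length vs)" by (simp add: dist_norm)
  qed
  moreover have "path_image (polyline (b + v) vs) \<subseteq> cball (b + v) (length vs)"
    using Cons by simp
  ultimately show ?case
    by (auto simp: path_image_join subset_cball)
qed simp

lemma path_image_polyline_subset:
  assumes step: "\<And>c v. c \<in> C \<Longrightarrow> v \<in> V \<Longrightarrow> c + v \<in> C \<and> closed_segment c (c + v) \<subseteq> T"
    and "C \<subseteq> T" and "b \<in> C" and "set vs \<subseteq> V"
  shows "path_image (polyline b vs) \<subseteq> T"
  using assms(3,4)
proof (induction vs arbitrary: b)
  case Nil
  then show ?case using \<open>C \<subseteq> T\<close> by auto
next
  case (Cons v vs)
  then show ?case using step[of b v] by (simp add: path_image_join)
qed

lemma homotopic_paths_polyline_cancel: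
  assumes "path_image (polyline b (v # - v # vs)) \<subseteq> S"
  shows "homotopic_paths S (polyline b (v # - v # vs)) (polyline b vs)"
proof -
  let ?l = "linepath b (b + v)" and ?p = "polyline b vs"
  have S: "closed_segment b (b + v) \<subseteq> S" "path_image ?p \<subseteq> S"
    using assms by (auto simp: path_image_join)
  have "homotopic_paths S (?l +++ (reversepath ?l +++ ?p)) ((?l +++ reversepath ?l) +++ ?p)"
    using S by (intro homotopic_paths_assoc) (auto simp: closed_segment_commute)
  also have "homotopic_paths S \<dots> (linepath b b +++ ?p)"
    using S homotopic_paths_rinv[of ?l S] by (intro homotopic_paths_join) auto
  also have "homotopic_paths S \<dots> ?p"
    using S by (intro homotopic_paths_lid') auto
  finally show ?thesis by simp
qed

lemma homotopic_paths_polyline_free_reduce: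
  assumes inv: "\<And>a e. f (a, \<not> e) = - f (a, e)"
    and S: "path_image (polyline b (map f u)) \<subseteq> S"
  shows "homotopic_paths S (polyline b (map f u)) (polyline b (map f (free_reduce u)))"
  using S
proof (induction u arbitrary: b)
  case Nil
  then show ?case by (simp add: path_const reversepath_def)
next
  case (Cons x xs)
  have S: "closed_segment b (b + f x) \<subseteq> S" "path_image (polyline (b + f x) (map f xs)) \<subseteq> S"
    using Cons.prems by (auto simp: path_image_join)
  have reduce_tail: "homotopic_paths S (polyline b (map f (x # xs)))
      (polyline b (f x # map f (free_reduce xs)))"
    using Cons.IH[OF S(2)] S(1) by (auto intro: homotopic_paths_join)
  show ?case
  proof (cases "free_reduce xs")
    case Nil
    then show ?thesis using reduce_tail by simp
  next
    case (Cons y ys)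
    show ?thesis
    proof (cases "fst y = fst x \<and> snd y \<noteq> snd x")
      case True
      then have "f y = - f x" using inv[of "fst x" "snd x"] by (cases x, cases y) auto
      then have "homotopic_paths S (polyline b (map f (x # xs))) (polyline b (f x # - f x # map f ys))"
        using reduce_tail Cons by simp
      also have "homotopic_paths S \<dots> (polyline b (map f ys))"
        using homotopic_paths_imp_subset[OF calculation]
        by (intro homotopic_paths_polyline_cancel) auto
      also have "ys = free_reduce (x # xs)"
        using Cons True by simp
      finally show ?thesis .
    next
      case False
      then have "free_reduce (x # xs) = x # free_reduce xs"
        using Cons by simp
      then show ?thesis using reduce_tail by simp
    qed
  qed
qed

lemma homotopic_paths_polyline_filter_nonzero:
  assumes "path_image (polyline b vs) \<subseteq> S"
  shows "homotopic_paths S (polyline b vs) (polyline b (filter (\<lambda>v. v \<noteq> 0) vs))"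
  using assms
proof (induction vs arbitrary: b)
  case Nil
  then show ?case by (simp add: path_const reversepath_def)
next
  case (Cons v vs)
  have S: "closed_segment b (b + v) \<subseteq> S" "path_image (polyline (b + v) vs) \<subseteq> S"
    using Cons.prems by (auto simp: path_image_join)
  show ?case
  proof (cases "v = 0")
    case True
    then have "homotopic_paths S (polyline b (v # vs)) (polyline b vs)"
      using S by (auto intro: homotopic_paths_lid')
    then show ?thesis using Cons.IH S True by (auto intro: homotopic_paths_trans)
  next
    case False
    then show ?thesis using Cons.IH S by (auto intro: homotopic_paths_join)
  qed
qed

lemma homotopic_paths_polyline_null:
  assumes "filter (\<lambda>v. v \<noteq> 0) vs = map f u" and "free_reduce u = []"
    and "\<And>a e. f (a, \<not> e) = - f (a, e)"
    and S: "path_image (polyline b vs) \<subseteq> S"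
  shows "homotopic_paths S (polyline b vs) (linepath b b)"
proof -
  have "homotopic_paths S (polyline b vs) (polyline b (map f u))"
    using homotopic_paths_polyline_filter_nonzero[OF S] assms(1) by simp
  also have "homotopic_paths S \<dots> (polyline b (map f (free_reduce u)))"
    using homotopic_paths_imp_subset[OF calculation] assms(3)
    by (intro homotopic_paths_polyline_free_reduce) auto
  finally show ?thesis using assms(2) by simp
qed

lemma sum_list_map_uminus: "sum_list (map uminus vs) = - sum_list (vs :: 'a::ab_group_add list)"
  by (induction vs) simp_all

lemma homotopic_paths_reversepath_polyline:
  assumes "path_image (polyline b vs) \<subseteq> S"
  shows "homotopic_paths S (reversepath (polyline b vs))
           (polyline (b + sum_list vs) (rev (map uminus vs)))"
  using assms
proof (induction vs arbitrary: b)
  case Nil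
  then show ?case by (simp add: path_const reversepath_def)
next
  case (Cons v vs)
  let ?c = "b + v" and ?e = "b + v + sum_list vs"
  have S: "closed_segment b ?c \<subseteq> S" "path_image (polyline ?c vs) \<subseteq> S"
    using Cons.prems by (auto simp: path_image_join)
  have IH: "homotopic_paths S (reversepath (polyline ?c vs)) (polyline ?e (rev (map uminus vs)))"
    using Cons.IH[OF S(2)] .
  have "homotopic_paths S (reversepath (polyline ?c vs) +++ linepath ?c b)
      (polyline ?e (rev (map uminus vs)) +++ polyline ?c [- v])"
  proof (rule homotopic_paths_join[OF IH])
    show "homotopic_paths S (linepath ?c b) (polyline ?c [- v])"
      using S homotopic_paths_rid[of "linepath ?c b" S]
      by (simp add: homotopic_paths_sym closed_segment_commute)
  qed (simp add: sum_list_rev)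
  also have "homotopic_paths S \<dots> (polyline ?e (rev (map uminus vs) @ [- v]))"
  proof -
    have img: "path_image (polyline ?e (rev (map uminus vs) @ [- v])) \<subseteq> S"
      using homotopic_paths_imp_subset[OF IH] S
      by (auto simp: path_image_polyline_append path_image_join sum_list_rev sum_list_map_uminus closed_segment_commute)
    show ?thesis
      using homotopic_paths_sym[OF homotopic_paths_polyline_append[OF img]]
      by (simp add: sum_list_rev sum_list_map_uminus)
  qed
  finally show ?case by (simp add: reversepath_joinpaths add.assoc)
qed

section \<open>The braid loop as a polygonal path\<close>

lemma pathstart_word_path [simp]: "pathstart (word_path b w) = b"
  by (simp add: pathstart_def word_path_def vertex_def)

lemma word_path_single: "word_path b [a] = linepath b (b + disp a)"
  by (rule ext) (simp add: word_path_def vertex_def linepath_def algebra_simps)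

lemma word_path_Cons_head:
  assumes "0 \<le> t" and "t * real (Suc (length w)) \<le> 1"
  shows "word_path b (a # w) t = b + (t * real (Suc (length w))) *\<^sub>R disp a"
proof -
  let ?\<tau> = "t * real (Suc (length w))"
  have "0 \<le> ?\<tau>" using assms(1) by simp
  then consider "\<lfloor>?\<tau>\<rfloor> = 0" | "?\<tau> = 1"
    using assms(2) by (cases "?\<tau> = 1") (auto simp: floor_eq_iff)
  then show ?thesis
  proof cases
    case 1
    then show ?thesis by (simp add: word_path_def vertex_def Let_def)
  next
    case 2
    then show ?thesis
      by (cases w) (simp_all add: word_path_def vertex_def Let_def)
  qed
qed

lemma word_path_Cons_tail:
  assumes "w \<noteq> []" and "1 \<le> t * real (Suc (length w))"
  shows "word_path b (a # w) t
    = word_path (b + disp a) w ((t * real (Suc (length w)) - 1) / real (length w))"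
proof -
  let ?n = "length w" and ?\<tau> = "t * real (Suc (length w))"
  let ?t' = "(?\<tau> - 1) / real ?n"
  define j where "j = nat (min (int ?n - 1) (\<lfloor>?\<tau>\<rfloor> - 1))"
  have n: "0 < ?n" using assms(1) by simp
  have fl: "1 \<le> \<lfloor>?\<tau>\<rfloor>" using assms(2) by (simp add: le_floor_iff)
  have t': "?t' * real ?n = ?\<tau> - 1" using n by simp
  have "\<lfloor>?\<tau> - 1\<rfloor> = \<lfloor>?\<tau>\<rfloor> - 1" by (simp add: floor_diff_one)
  then have j': "nat (min (int ?n - 1) (max 0 \<lfloor>?t' * real ?n\<rfloor>)) = j"
    using fl by (simp add: t' j_def)
  have "nat (min (int ?n) (max 0 F)) = Suc (nat (min (int ?n - 1) (F - 1)))" if "1 \<le> F" for F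
    using that n by arith
  from this[OF fl]
  have j: "nat (min (int (length (a # w)) - 1) (max 0 \<lfloor>t * real (length (a # w))\<rfloor>)) = Suc j"
    by (simp add: j_def)
  show ?thesis
    using assms(1) unfolding word_path_def vertex_def Let_def j j' unfolding t'
    by (simp add: algebra_simps)
qed

lemma homotopic_paths_word_path_Cons:
  assumes "w \<noteq> []" and "path (word_path (b + disp a) w)"
    and S: "path_image (linepath b (b + disp a) +++ word_path (b + disp a) w) \<subseteq> S"
  shows "homotopic_paths S (word_path b (a # w)) (linepath b (b + disp a) +++ word_path (b + disp a) w)"
proof -
  let ?c = "b + disp a" and ?L = "real (Suc (length w))" and ?n = "real (length w)"
  have n: "0 < ?n" using assms(1) by simp
  \<comment> \<open>\<open>f\<close> sends the first of the \<open>length (a # w)\<close> equal parameter intervals of \<open>word_path\<close>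
    onto the first half of the join\<close>
  define f where "f t = (if t * ?L \<le> 1 then t * ?L / 2 else 1/2 + (t * ?L - 1) / (2 * ?n))" for t
  have "homotopic_paths S (linepath b ?c +++ word_path ?c w) (word_path b (a # w))"
  proof (rule homotopic_paths_reparametrize[where f = f])
    show "path (linepath b ?c +++ word_path ?c w)"
      using assms(2) by simp
    show "continuous_on {0..1} f"
      unfolding f_def using n by (intro continuous_on_cases_le continuous_intros) (auto simp: field_simps)
    show "f \<in> {0..1} \<rightarrow> {0..1}"
    proof
      fix t :: real assume t: "t \<in> {0..1}"
      then have "t * ?L \<le> 1 + ?n" by (simp add: mult_left_le_one_le)
      then show "f t \<in> {0..1}" using t n by (auto simp: f_def field_simps)
    qed
    show "f 0 = 0" "f 1 = 1" using assms(1) by (simp_all add: f_def field_simps)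
    fix t :: real assume t: "t \<in> {0..1}"
    show "word_path b (a # w) t = (linepath b ?c +++ word_path ?c w) (f t)"
    proof (cases "t * ?L \<le> 1")
      case True
      then have "f t \<le> 1/2" "2 * f t = t * ?L"
        by (simp_all add: f_def)
      then show ?thesis
        using t True by (simp add: word_path_Cons_head joinpaths_def linepath_def algebra_simps)
    next
      case False
      then have "\<not> f t \<le> 1/2" "2 * f t - 1 = (t * ?L - 1) / ?n"
        using n by (simp_all add: f_def field_simps)
      then show ?thesis
        using False by (simp add: word_path_Cons_tail[OF assms(1)] joinpaths_def)
    qed
  qed (rule S)
  then show ?thesis by (rule homotopic_paths_sym)
qed

lemma homotopic_paths_word_path_polyline:
  assumes "path_image (polyline b (map disp w)) \<subseteq> S"
  shows "homotopic_paths S (word_path b w) (polyline b (map disp w))"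
  using assms
proof (induction w arbitrary: b)
  case Nil
  then show ?case by (simp add: word_path_def path_const)
next
  case (Cons a w)
  let ?c = "b + disp a"
  have S: "closed_segment b ?c \<subseteq> S" "path_image (polyline ?c (map disp w)) \<subseteq> S"
    using Cons.prems by (auto simp: path_image_join)
  have IH: "homotopic_paths S (word_path ?c w) (polyline ?c (map disp w))"
    using Cons.IH[OF S(2)] .
  show ?case
  proof (cases "w = []")
    case True
    then show ?thesis
      using S homotopic_paths_rid[of "linepath b ?c" S]
      by (simp add: word_path_single homotopic_paths_sym)
  next
    case False
    have "homotopic_paths S (word_path b (a # w)) (linepath b ?c +++ word_path ?c w)"
      using homotopic_paths_imp_path[OF IH] homotopic_paths_imp_subset[OF IH] S
      by (intro homotopic_paths_word_path_Cons[OF False]) (auto simp: path_image_join)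
    also have "homotopic_paths S \<dots> (linepath b ?c +++ polyline ?c (map disp w))"
      using S IH by (intro homotopic_paths_join) auto
    finally show ?thesis by simp
  qed
qed

section \<open>Grid lines and the configuration space\<close>

definition shifted_lattice :: "real \<Rightarrow> complex set" where
  "shifted_lattice a = {z. Re z + a \<in> \<int> \<and> Im z + a \<in> \<int>}"

definition grid_lines :: "real \<Rightarrow> complex set" where
  "grid_lines a = {z. Re z + a \<in> \<int> \<or> Im z + a \<in> \<int>}"

definition unit_steps :: "complex set" where
  "unit_steps = {0, 1, -1, \<i>, -\<i>}"

lemma shifted_lattice_add_unit_step:
  "z \<in> shifted_lattice a \<Longrightarrow> v \<in> unit_steps \<Longrightarrow> z + v \<in> shifted_lattice a"
  by (auto simp: shifted_lattice_def unit_steps_def add.commute[of _ a] add.assoc[symmetric])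

lemma closed_segment_unit_step_subset_grid_lines:
  assumes "z \<in> shifted_lattice a" and "v \<in> unit_steps"
  shows "closed_segment z (z + v) \<subseteq> grid_lines a"
  using assms
  by (auto simp: shifted_lattice_def grid_lines_def unit_steps_def closed_segment_def algebra_simps)

lemma shifted_lattice_subset_grid_lines: "shifted_lattice a \<subseteq> grid_lines a"
  by (auto simp: shifted_lattice_def grid_lines_def)

lemma path_image_polyline_subset_grid_lines:
  assumes "b \<in> shifted_lattice a" and "set vs \<subseteq> unit_steps"
  shows "path_image (polyline b vs) \<subseteq> grid_lines a"
  by (rule path_image_polyline_subset[OF _ shifted_lattice_subset_grid_lines assms])
    (simp add: shifted_lattice_add_unit_step closed_segment_unit_step_subset_grid_lines)

lemma shifted_lattice_diff:
  assumes "x \<in> shifted_lattice a" and "y \<in> shifted_lattice c"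
  shows "x - y \<in> shifted_lattice (a - c)"
proof -
  have "Re (x - y) + (a - c) = (Re x + a) - (Re y + c)" "Im (x - y) + (a - c) = (Im x + a) - (Im y + c)"
    by simp_all
  then show ?thesis
    using assms unfolding shifted_lattice_def by (simp only: mem_Collect_eq Ints_diff)
qed
lemma zero_notin_grid_lines: "a \<notin> \<int> \<Longrightarrow> 0 \<notin> grid_lines a"
  by (simp add: grid_lines_def)

lemma shifted_lattice_disjoint_grid_lines:
  assumes "a - c \<notin> \<int>" and "z \<in> shifted_lattice a"
  shows "z \<notin> grid_lines c"
proof
  assume "z \<in> grid_lines c"
  moreover have "a - c = (Re z + a) - (Re z + c)" "a - c = (Im z + a) - (Im z + c)"
    by simp_all
  ultimately show False
    using assms unfolding shifted_lattice_def grid_lines_def by (metis Ints_diff mem_Collect_eq)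
qed

lemma notin_Ints_if_abs_less1:
  fixes x :: real
  assumes "0 < \<bar>x\<bar>" and "\<bar>x\<bar> < 1"
  shows "x \<notin> \<int>"
  using Ints_nonzero_abs_less1[of x] assms by auto

abbreviation punctured_conf2 :: "(complex \<times> complex) set" where
  "punctured_conf2 \<equiv> conf2 (UNIV - {0})"

definition base_lattice :: "(complex \<times> complex) set" where
  "base_lattice = shifted_lattice (1/3) \<times> shifted_lattice (-1/3)"

lemma disp_cases:
  obtains v where "v \<in> unit_steps" "disp a = (v, 0)"
  | v where "v \<in> unit_steps" "disp a = (0, v)"
proof -
  obtain g e where "a = (g, e)" by (cases a)
  then show ?thesis using that by (cases g; cases e) (auto simp: unit_steps_def sgnb_def)
qed

lemma base_lattice_add_disp: "c \<in> base_lattice \<Longrightarrow> c + disp a \<in> base_lattice"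
  by (cases a rule: disp_cases) (auto simp: base_lattice_def shifted_lattice_add_unit_step)

lemma closed_segment_disp_subset_punctured_conf2:
  assumes "c \<in> base_lattice"
  shows "closed_segment c (c + disp a) \<subseteq> punctured_conf2"
proof
  fix q assume q: "q \<in> closed_segment c (c + disp a)"
  obtain x y where c: "c = (x, y)" and x: "x \<in> shifted_lattice (1/3)" and y: "y \<in> shifted_lattice (-1/3)"
    using assms by (auto simp: base_lattice_def)
  have x0: "x \<notin> grid_lines (-1/3)"
    by (rule shifted_lattice_disjoint_grid_lines[OF _ x]) (rule notin_Ints_if_abs_less1; simp)
  have y0: "y \<notin> grid_lines (1/3)"
    by (rule shifted_lattice_disjoint_grid_lines[OF _ y]) (rule notin_Ints_if_abs_less1; simp)
  have "x \<in> grid_lines (1/3)" "y \<in> grid_lines (-1/3)"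
    using x y shifted_lattice_subset_grid_lines by blast+
  then have nz: "x \<noteq> 0" "y \<noteq> 0"
    using zero_notin_grid_lines notin_Ints_if_abs_less1 by auto
  show "q \<in> punctured_conf2"
  proof (cases a rule: disp_cases)
    case (1 v)
    obtain x' y' where q': "q = (x', y')" by (cases q)
    with q 1 have "x' \<in> closed_segment x (x + v)" "y' = y"
      by (auto simp: c dest: closed_segment_PairD)
    then have "x' \<in> grid_lines (1/3)" "y' = y"
      using closed_segment_unit_step_subset_grid_lines[OF x 1(1)] by auto
    then show ?thesis
      using q' y0 nz zero_notin_grid_lines notin_Ints_if_abs_less1 by (auto simp: conf2_def)
  next
    case (2 v)
    obtain x' y' where q': "q = (x', y')" by (cases q)
    with q 2 have "y' \<in> closed_segment y (y + v)" "x' = x"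
      by (auto simp: c dest: closed_segment_PairD)
    then have "y' \<in> grid_lines (-1/3)" "x' = x"
      using closed_segment_unit_step_subset_grid_lines[OF y 2(1)] by auto
    then show ?thesis
      using q' x0 nz zero_notin_grid_lines notin_Ints_if_abs_less1 by (auto simp: conf2_def)
  qed
qed

lemma path_image_polyline_disp_subset:
  assumes "b \<in> base_lattice"
  shows "path_image (polyline b (map disp w)) \<subseteq> punctured_conf2"
proof (rule path_image_polyline_subset[where V = "range disp", OF _ _ assms])
  show "base_lattice \<subseteq> punctured_conf2"
    using closed_segment_disp_subset_punctured_conf2 by fastforce
  show "c + v \<in> base_lattice \<and> closed_segment c (c + v) \<subseteq> punctured_conf2"
    if "c \<in> base_lattice" and "v \<in> range disp" for c v
    using that base_lattice_add_disp closed_segment_disp_subset_punctured_conf2 by blast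
qed auto

lemma base_pt_in_base_lattice:
  "px \<in> gauss_ints \<Longrightarrow> py \<in> gauss_ints \<Longrightarrow> base_pt px py \<in> base_lattice"
  by (simp add: base_pt_def base_lattice_def shifted_lattice_def gauss_ints_def)

lemma I_nontrivial_iff_polyline:
  assumes "px \<in> gauss_ints" and "py \<in> gauss_ints"
  defines "b \<equiv> base_pt px py"
  shows "I_nontrivial px py w
    \<longleftrightarrow> \<not> homotopic_paths punctured_conf2 (polyline b (map disp w)) (linepath b b)"
proof -
  have "homotopic_paths punctured_conf2 (word_path b w) (polyline b (map disp w))"
    using assms unfolding b_def
    by (intro homotopic_paths_word_path_polyline path_image_polyline_disp_subset base_pt_in_base_lattice)
  then show ?thesis
    unfolding I_nontrivial_def b_def[symmetric] linepath_refl
    by (meson homotopic_paths_sym homotopic_paths_trans)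
qed

definition unit_letter :: "nat letter \<Rightarrow> complex" where
  "unit_letter a = sgnb (snd a) * (if fst a = 1 then 1 else \<i>)"

lemma unit_letter_inverse: "unit_letter (n, \<not> e) = - unit_letter (n, e)"
  by (simp add: unit_letter_def sgnb_def)

lemma filter_nonzero_fst_disp:
  "filter (\<lambda>v. v \<noteq> 0) (map (\<lambda>a. fst (disp a)) w) = map unit_letter (comp_a w)"
proof (induction w)
  case (Cons a w)
  obtain g e where "a = (g, e)" by (cases a)
  then show ?case using Cons by (cases g) (simp_all add: comp_a_def unit_letter_def sgnb_def)
qed (simp add: comp_a_def)

lemma filter_nonzero_snd_disp:
  "filter (\<lambda>v. v \<noteq> 0) (map (\<lambda>a. snd (disp a)) w) = map (\<lambda>a. - unit_letter a) (comp_b w)"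
proof (induction w)
  case (Cons a w)
  obtain g e where "a = (g, e)" by (cases a)
  then show ?case using Cons by (cases g) (simp_all add: comp_b_def unit_letter_def sgnb_def)
qed (simp add: comp_b_def)

lemma filter_nonzero_diff_disp:
  "filter (\<lambda>v. v \<noteq> 0) (map (\<lambda>a. fst (disp a) - snd (disp a)) w)
     = map (\<lambda>a. - unit_letter a) (comp_c w)"
proof (induction w)
  case (Cons a w)
  obtain g e where "a = (g, e)" by (cases a)
  then show ?case using Cons by (cases g) (simp_all add: comp_c_def unit_letter_def sgnb_def)
qed (simp add: comp_c_def)

lemma disp_components_in_unit_steps:
  "fst (disp a) \<in> unit_steps" "snd (disp a) \<in> unit_steps" "fst (disp a) - snd (disp a) \<in> unit_steps"
  by (cases a rule: disp_cases; auto simp: unit_steps_def)+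

lemma polyline_disp_projections:
  "fst \<circ> polyline b (map disp w) = polyline (fst b) (map (\<lambda>a. fst (disp a)) w)"
  "snd \<circ> polyline b (map disp w) = polyline (snd b) (map (\<lambda>a. snd (disp a)) w)"
  "(\<lambda>t. fst (polyline b (map disp w) t) - snd (polyline b (map disp w) t))
     = polyline (fst b - snd b) (map (\<lambda>a. fst (disp a) - snd (disp a)) w)"
proof -
  have "bounded_linear (\<lambda>z :: complex \<times> complex. fst z - snd z)"
    by (intro bounded_linear_sub bounded_linear_fst bounded_linear_snd)
  from polyline_compose_linear[OF this, of b "map disp w"]
    polyline_compose_linear[OF bounded_linear_fst, of b "map disp w"]
    polyline_compose_linear[OF bounded_linear_snd, of b "map disp w"]
  show "fst \<circ> polyline b (map disp w) = polyline (fst b) (map (\<lambda>a. fst (disp a)) w)"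
    "snd \<circ> polyline b (map disp w) = polyline (snd b) (map (\<lambda>a. snd (disp a)) w)"
    "(\<lambda>t. fst (polyline b (map disp w) t) - snd (polyline b (map disp w) t))
       = polyline (fst b - snd b) (map (\<lambda>a. fst (disp a) - snd (disp a)) w)"
    by (simp_all add: o_def)
qed

lemma in_T_projections_null:
  assumes w: "in_T w" and b: "b \<in> base_lattice"
  defines "p \<equiv> polyline b (map disp w)"
  shows "homotopic_paths (grid_lines (1/3)) (fst \<circ> p) (linepath (fst b) (fst b))"
    and "homotopic_paths (grid_lines (-1/3)) (snd \<circ> p) (linepath (snd b) (snd b))"
    and "homotopic_paths (grid_lines (2/3)) (\<lambda>t. fst (p t) - snd (p t))
           (linepath (fst b - snd b) (fst b - snd b))"
proof -
  have x: "fst b \<in> shifted_lattice (1/3)" and y: "snd b \<in> shifted_lattice (-1/3)"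
    using b by (auto simp: base_lattice_def)
  have d: "fst b - snd b \<in> shifted_lattice (2/3)"
    using shifted_lattice_diff[OF x y] by simp
  show "homotopic_paths (grid_lines (1/3)) (fst \<circ> p) (linepath (fst b) (fst b))"
    unfolding p_def polyline_disp_projections using w disp_components_in_unit_steps
    by (intro homotopic_paths_polyline_null[OF filter_nonzero_fst_disp]
        path_image_polyline_subset_grid_lines[OF x]) (auto simp: in_T_def unit_letter_inverse)
  show "homotopic_paths (grid_lines (-1/3)) (snd \<circ> p) (linepath (snd b) (snd b))"
    unfolding p_def polyline_disp_projections using w disp_components_in_unit_steps
    by (intro homotopic_paths_polyline_null[OF filter_nonzero_snd_disp]
        path_image_polyline_subset_grid_lines[OF y]) (auto simp: in_T_def unit_letter_inverse)
  show "homotopic_paths (grid_lines (2/3)) (\<lambda>t. fst (p t) - snd (p t))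
      (linepath (fst b - snd b) (fst b - snd b))"
    unfolding p_def polyline_disp_projections using w disp_components_in_unit_steps
    by (intro homotopic_paths_polyline_null[OF filter_nonzero_diff_disp]
        path_image_polyline_subset_grid_lines[OF d]) (auto simp: in_T_def unit_letter_inverse)
qed

lemma sum_list_disp_eq_0:
  assumes "in_T w"
  shows "sum_list (map disp w) = 0"
proof -
  let ?b = "base_pt 0 0"
  have b: "?b \<in> base_lattice"
    by (rule base_pt_in_base_lattice) (simp_all add: gauss_ints_def)
  have "pathfinish (fst \<circ> polyline ?b (map disp w)) = fst ?b"
    "pathfinish (snd \<circ> polyline ?b (map disp w)) = snd ?b"
    using homotopic_paths_imp_pathfinish[OF in_T_projections_null(1)[OF assms b]]
      homotopic_paths_imp_pathfinish[OF in_T_projections_null(2)[OF assms b]]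
    by simp_all
  then show ?thesis
    by (simp add: pathfinish_compose prod_eq_iff)
qed

section \<open>Loops with a far base point\<close>

lemma homotopic_paths_freeze_fst:
  fixes p :: "real \<Rightarrow> complex \<times> complex"
  assumes p: "path p" "path_image p \<subseteq> punctured_conf2" "pathstart p = (x0, y0)" "pathfinish p = (x0, y0)"
    and bound: "\<And>t. t \<in> {0..1} \<Longrightarrow> dist (fst (p t)) x0 \<le> R \<and> dist (snd (p t)) y0 \<le> R"
    and far: "R < norm x0" "2 * R < dist x0 y0"
  shows "homotopic_paths punctured_conf2 p (\<lambda>t. (x0, snd (p t)))"
proof (rule homotopic_paths_linear)
  show "path p" by (rule p(1))
  show "path (\<lambda>t. (x0, snd (p t)))"
    using p(1) unfolding path_def by (intro continuous_intros)
  show "pathstart (\<lambda>t. (x0, snd (p t))) = pathstart p" "pathfinish (\<lambda>t. (x0, snd (p t))) = pathfinish p"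
    using p(3,4) by (simp_all add: pathstart_def pathfinish_def)
  have "0 \<le> R" using bound[of 0] p(3) by (simp add: pathstart_def)
  fix t :: real assume t: "t \<in> {0..1}"
  obtain x y where pt: "p t = (x, y)" by (cases "p t")
  have "p t \<in> punctured_conf2" using p(2) t by (auto simp: path_image_def)
  then have y: "y \<noteq> 0" using pt by (auto simp: conf2_def)
  have xR: "x \<in> cball x0 R" and yR: "dist y y0 \<le> R"
    using bound[OF t] pt by (auto simp: dist_commute)
  show "closed_segment (p t) (x0, snd (p t)) \<subseteq> punctured_conf2"
  proof
    fix q assume "q \<in> closed_segment (p t) (x0, snd (p t))"
    then have "fst q \<in> closed_segment x x0" "snd q = y"
      by (auto simp: pt dest: closed_segment_PairD[of "fst q" "snd q", simplified])
    moreover have "closed_segment x x0 \<subseteq> cball x0 R"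
      using xR \<open>0 \<le> R\<close> by (intro closed_segment_subset) auto
    ultimately have qR: "dist x0 (fst q) \<le> R" and "snd q = y" by auto
    have "fst q \<noteq> 0" using qR far(1) by auto
    moreover have "fst q \<noteq> snd q"
      using qR yR far(2) dist_triangle[of x0 y0 "fst q"] \<open>snd q = y\<close>
      by (auto simp: dist_commute)
    ultimately show "q \<in> punctured_conf2"
      using y \<open>snd q = y\<close> by (cases q) (auto simp: conf2_def)
  qed
qed

lemma homotopic_paths_null_if_fst_far:
  fixes p :: "real \<Rightarrow> complex \<times> complex"
  assumes p: "path p" "path_image p \<subseteq> punctured_conf2" "pathstart p = (x0, y0)" "pathfinish p = (x0, y0)"
    and bound: "\<And>t. t \<in> {0..1} \<Longrightarrow> dist (fst (p t)) x0 \<le> R \<and> dist (snd (p t)) y0 \<le> R"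
    and far: "R < norm x0" "2 * R < dist x0 y0"
    and snd_null: "homotopic_paths S (snd \<circ> p) (linepath y0 y0)" "0 \<notin> S" "x0 \<notin> S"
  shows "homotopic_paths punctured_conf2 p (linepath (x0, y0) (x0, y0))"
proof -
  have "x0 \<noteq> 0" using bound[of 0] p(3) far(1) by (auto simp: pathstart_def)
  then have "Pair x0 \<in> S \<rightarrow> punctured_conf2" using snd_null(2,3) by (auto simp: conf2_def)
  from homotopic_paths_continuous_image[OF snd_null(1) _ this]
  have "homotopic_paths punctured_conf2 (\<lambda>t. (x0, snd (p t))) (Pair x0 \<circ> linepath y0 y0)"
    by (simp add: o_def continuous_on_Pair)
  with homotopic_paths_freeze_fst[OF p bound far] show ?thesis
    by (simp add: o_def linepath_refl homotopic_paths_trans)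
qed

lemma homotopic_paths_null_if_snd_far:
  fixes p :: "real \<Rightarrow> complex \<times> complex"
  assumes p: "path p" "path_image p \<subseteq> punctured_conf2" "pathstart p = (x0, y0)" "pathfinish p = (x0, y0)"
    and bound: "\<And>t. t \<in> {0..1} \<Longrightarrow> dist (fst (p t)) x0 \<le> R \<and> dist (snd (p t)) y0 \<le> R"
    and far: "R < norm y0" "2 * R < dist x0 y0"
    and fst_null: "homotopic_paths S (fst \<circ> p) (linepath x0 x0)" "0 \<notin> S" "y0 \<notin> S"
  shows "homotopic_paths punctured_conf2 p (linepath (x0, y0) (x0, y0))"
proof -
  have swap: "prod.swap \<in> punctured_conf2 \<rightarrow> punctured_conf2"
    by (auto simp: conf2_def)
  have "homotopic_paths punctured_conf2 (prod.swap \<circ> p) (linepath (y0, x0) (y0, x0))"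
  proof (rule homotopic_paths_null_if_fst_far)
    show "path (prod.swap \<circ> p)"
      using p(1) by (intro path_continuous_image continuous_intros)
    show "path_image (prod.swap \<circ> p) \<subseteq> punctured_conf2"
      using p(2) by (auto simp: path_image_compose conf2_def)
    have "snd \<circ> (prod.swap \<circ> p) = fst \<circ> p" by (rule ext) simp
    then show "homotopic_paths S (snd \<circ> (prod.swap \<circ> p)) (linepath x0 x0)"
      using fst_null(1) by simp
  qed (use p bound far fst_null in \<open>auto simp: pathstart_compose pathfinish_compose dist_commute\<close>)
  from homotopic_paths_continuous_image[OF this continuous_on_swap swap]
  show ?thesis by (simp add: o_assoc[symmetric] linepath_refl o_def)
qed

definition radial_retraction :: "real \<Rightarrow> 'a::real_normed_vector \<Rightarrow> 'a" where
  "radial_retraction M z = (M / max M (norm z)) *\<^sub>R z"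

lemma radial_retraction_id: "0 < M \<Longrightarrow> norm z \<le> M \<Longrightarrow> radial_retraction M z = z"
  by (simp add: radial_retraction_def max_def)

lemma norm_radial_retraction_le: "0 < M \<Longrightarrow> norm (radial_retraction M z) \<le> M"
  by (cases "norm z \<le> M") (auto simp: radial_retraction_def max_def)

lemma radial_retraction_eq_0_iff: "0 < M \<Longrightarrow> radial_retraction M z = 0 \<longleftrightarrow> z = 0"
  by (auto simp: radial_retraction_def max_def)

lemma continuous_on_radial_retraction [continuous_intros]:
  "0 < M \<Longrightarrow> continuous_on A f \<Longrightarrow> continuous_on A (\<lambda>x. radial_retraction M (f x))"
  unfolding radial_retraction_def by (intro continuous_intros) auto

definition centred_pair :: "complex \<Rightarrow> complex \<Rightarrow> complex \<times> complex" where
  "centred_pair c z = (c + z / 2, c - z / 2)"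

lemma centred_pair_midpoint: "centred_pair ((x + y) / 2) (x - y) = (x, y)"
  by (simp add: centred_pair_def field_simps)

lemma centred_pair_in_punctured_conf2:
  assumes "z \<noteq> 0" and "norm z < 2 * norm c"
  shows "centred_pair c z \<in> punctured_conf2"
proof -
  have "norm (- (2 * c)) = 2 * norm c" "norm (2 * c) = 2 * norm c"
    by (simp_all add: norm_mult)
  then have "z \<noteq> - (2 * c)" "z \<noteq> 2 * c"
    using assms(2) by auto
  then have "z + 2 * c \<noteq> 0" "2 * c - z \<noteq> 0"
    by (simp_all add: eq_neg_iff_add_eq_0[symmetric])
  moreover have e: "c + z / 2 = (z + 2 * c) / 2" "c - z / 2 = (2 * c - z) / 2"
    by (simp_all add: add_divide_distrib diff_divide_distrib)
  ultimately show ?thesis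
    using assms(1) unfolding centred_pair_def e by (auto simp: conf2_def)
qed

lemma retracted_centred_pair_in_punctured_conf2:
  assumes "0 < M" and "M < 2 * norm c" and "z \<noteq> 0"
  shows "centred_pair c (radial_retraction M z) \<in> punctured_conf2"
  using assms norm_radial_retraction_le[OF assms(1), of z]
  by (intro centred_pair_in_punctured_conf2) (auto simp: radial_retraction_eq_0_iff)

lemma closed_segment_centred_pair_subset:
  assumes xy: "(x, y) \<in> punctured_conf2" and R: "dist x x0 \<le> R" "dist y y0 \<le> R"
    and far: "R < norm x0" "R < norm y0"
  shows "closed_segment (x, y) (centred_pair ((x0 + y0) / 2) (x - y)) \<subseteq> punctured_conf2"
proof
  let ?c = "(x0 + y0) / 2"
  fix q assume q: "q \<in> closed_segment (x, y) (centred_pair ?c (x - y))"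
  have e: "?c + (x - y) / 2 - x0 = ((x - x0) - (y - y0)) / 2"
    "?c - (x - y) / 2 - y0 = ((y - y0) - (x - x0)) / 2"
    by (simp_all add: field_simps)
  have "dist (?c + (x - y) / 2) x0 \<le> R" "dist (?c - (x - y) / 2) y0 \<le> R"
    unfolding dist_norm e
    using R norm_triangle_ineq4[of "x - x0" "y - y0"] norm_triangle_ineq4[of "y - y0" "x - x0"]
    by (simp_all add: dist_norm norm_divide)
  then have "closed_segment x (?c + (x - y) / 2) \<subseteq> cball x0 R"
    "closed_segment y (?c - (x - y) / 2) \<subseteq> cball y0 R"
    using R by (intro closed_segment_subset convex_cball; simp add: dist_commute)+
  then have "fst q \<in> cball x0 R" "snd q \<in> cball y0 R"
    using q by (auto simp: centred_pair_def dest: closed_segment_PairD[of "fst q" "snd q", simplified])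
  moreover have "linear (\<lambda>z :: complex \<times> complex. fst z - snd z)"
    using bounded_linear_sub[OF bounded_linear_fst bounded_linear_snd] by (rule bounded_linear.linear)
  from closed_segment_linear_image[OF this, of "(x, y)" "centred_pair ?c (x - y)"]
  have "fst q - snd q \<in> closed_segment (x - y) (x - y)"
    using q by (auto simp: centred_pair_def)
  then have "fst q \<noteq> snd q" using xy by (auto simp: conf2_def)
  ultimately show "q \<in> punctured_conf2"
    using far by (cases q) (auto simp: conf2_def dist_norm)
qed

lemma homotopic_paths_fix_midpoint:
  fixes p :: "real \<Rightarrow> complex \<times> complex"
  assumes p: "path p" "path_image p \<subseteq> punctured_conf2" "pathstart p = (x0, y0)" "pathfinish p = (x0, y0)"
    and bound: "\<And>t. t \<in> {0..1} \<Longrightarrow> dist (fst (p t)) x0 \<le> R \<and> dist (snd (p t)) y0 \<le> R"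
    and far: "R < norm x0" "R < norm y0"
  shows "homotopic_paths punctured_conf2 p (\<lambda>t. centred_pair ((x0 + y0) / 2) (fst (p t) - snd (p t)))"
proof (rule homotopic_paths_linear)
  show "path p" by (rule p(1))
  show "path (\<lambda>t. centred_pair ((x0 + y0) / 2) (fst (p t) - snd (p t)))"
    using p(1) unfolding path_def centred_pair_def by (intro continuous_intros) auto
  show "pathstart (\<lambda>t. centred_pair ((x0 + y0) / 2) (fst (p t) - snd (p t))) = pathstart p"
    "pathfinish (\<lambda>t. centred_pair ((x0 + y0) / 2) (fst (p t) - snd (p t))) = pathfinish p"
    using p(3,4) centred_pair_midpoint by (simp_all add: pathstart_def pathfinish_def)
  fix t :: real assume t: "t \<in> {0..1}"
  have "p t \<in> punctured_conf2" using p(2) t by (auto simp: path_image_def)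
  then show "closed_segment (p t) (centred_pair ((x0 + y0) / 2) (fst (p t) - snd (p t))) \<subseteq> punctured_conf2"
    using closed_segment_centred_pair_subset[of "fst (p t)" "snd (p t)" x0 R y0] bound[OF t] far
    by simp
qed

lemma homotopic_paths_null_if_sum_far:
  fixes p :: "real \<Rightarrow> complex \<times> complex"
  assumes p: "path p" "path_image p \<subseteq> punctured_conf2" "pathstart p = (x0, y0)" "pathfinish p = (x0, y0)"
    and bound: "\<And>t. t \<in> {0..1} \<Longrightarrow> dist (fst (p t)) x0 \<le> R \<and> dist (snd (p t)) y0 \<le> R"
    and far: "R < norm x0" "R < norm y0" "dist x0 y0 + 2 * R < norm (x0 + y0)"
    and diff_null: "homotopic_paths S (\<lambda>t. fst (p t) - snd (p t)) (linepath (x0 - y0) (x0 - y0))"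
      "0 \<notin> S"
  shows "homotopic_paths punctured_conf2 p (linepath (x0, y0) (x0, y0))"
proof -
  define c where "c = (x0 + y0) / 2"
  define M where "M = dist x0 y0 + 2 * R"
  have "0 \<le> R" using bound[of 0] p(3) by (simp add: pathstart_def)
  have "x0 \<noteq> y0"
    using p(2,3) pathstart_in_path_image[of p] by (auto simp: conf2_def)
  then have M: "0 < M" using \<open>0 \<le> R\<close> by (simp add: M_def add_pos_nonneg)
  \<comment> \<open>the retraction is the identity along \<open>p\<close>, where the difference of the strands stays in
    \<open>cball 0 M\<close>, and keeps both strands off the puncture on all of \<open>S\<close>\<close>
  define \<phi> where "\<phi> = centred_pair c \<circ> radial_retraction M"
  have mid: "homotopic_paths punctured_conf2 p (\<lambda>t. centred_pair c (fst (p t) - snd (p t)))"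
    unfolding c_def by (rule homotopic_paths_fix_midpoint[OF p bound far(1,2)])
  also have "homotopic_paths punctured_conf2 \<dots> (\<phi> \<circ> (\<lambda>t. fst (p t) - snd (p t)))"
  proof (rule homotopic_paths_eq)
    show "path (\<lambda>t. centred_pair c (fst (p t) - snd (p t)))"
      "path_image (\<lambda>t. centred_pair c (fst (p t) - snd (p t))) \<subseteq> punctured_conf2"
      using homotopic_paths_imp_path[OF mid] homotopic_paths_imp_subset[OF mid] by simp_all
    fix t :: real assume "t \<in> {0..1}"
    then have "norm (fst (p t) - snd (p t)) \<le> M"
      using bound dist_triangle[of "fst (p t)" "snd (p t)" x0] dist_triangle[of x0 "snd (p t)" y0]
      by (fastforce simp: M_def dist_norm[symmetric] dist_commute)
    then show "centred_pair c (fst (p t) - snd (p t)) = (\<phi> \<circ> (\<lambda>t. fst (p t) - snd (p t))) t"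
      by (simp add: \<phi>_def radial_retraction_id[OF M])
  qed
  also have "homotopic_paths punctured_conf2 \<dots> (\<phi> \<circ> linepath (x0 - y0) (x0 - y0))"
  proof (rule homotopic_paths_continuous_image[OF diff_null(1)])
    show "continuous_on S \<phi>"
      unfolding \<phi>_def centred_pair_def o_def using M by (intro continuous_intros) auto
    show "\<phi> \<in> S \<rightarrow> punctured_conf2"
      using diff_null(2) M far(3)
      by (auto simp: \<phi>_def c_def M_def norm_divide intro!: retracted_centred_pair_in_punctured_conf2)
  qed
  also have "\<phi> \<circ> linepath (x0 - y0) (x0 - y0) = linepath (x0, y0) (x0, y0)"
    using radial_retraction_id[OF M, of "x0 - y0"] \<open>0 \<le> R\<close> centred_pair_midpoint[of x0 y0]
    by (simp add: \<phi>_def c_def M_def dist_norm o_def linepath_refl)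
  finally show ?thesis .
qed

lemma norm_le_1_if_unit_step: "v \<in> unit_steps \<Longrightarrow> norm v \<le> 1"
  by (auto simp: unit_steps_def)

lemma dist_polyline_disp_le:
  assumes "t \<in> {0..1}"
  shows "dist (fst (polyline b (map disp w) t)) (fst b) \<le> length w
    \<and> dist (snd (polyline b (map disp w) t)) (snd b) \<le> length w"
proof -
  have "path_image (fst \<circ> polyline b (map disp w)) \<subseteq> cball (fst b) (length (map (\<lambda>a. fst (disp a)) w))"
    "path_image (snd \<circ> polyline b (map disp w)) \<subseteq> cball (snd b) (length (map (\<lambda>a. snd (disp a)) w))"
    unfolding polyline_disp_projections
    by (intro path_image_polyline_subset_cball; auto intro: norm_le_1_if_unit_step disp_components_in_unit_steps)+
  then show ?thesis
    using assms by (auto simp: path_image_def image_subset_iff dist_commute)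
qed

lemma far_base_point_cases:
  fixes x0 y0 :: complex
  assumes "0 \<le> R" and "5 * R < norm x0 \<or> 5 * R < norm y0"
  obtains "R < norm x0" "2 * R < dist x0 y0"
    | "R < norm y0" "2 * R < dist x0 y0"
    | "R < norm x0" "R < norm y0" "dist x0 y0 + 2 * R < norm (x0 + y0)"
proof -
  have "2 * x0 = (x0 + y0) + (x0 - y0)" "2 * y0 = (x0 + y0) - (x0 - y0)" by simp_all
  then have "2 * norm x0 \<le> norm (x0 + y0) + dist x0 y0" "2 * norm y0 \<le> norm (x0 + y0) + dist x0 y0"
    using norm_triangle_ineq[of "x0 + y0" "x0 - y0"] norm_triangle_ineq4[of "x0 + y0" "x0 - y0"]
    by (simp_all add: norm_mult dist_norm)
  moreover have "norm x0 \<le> norm y0 + dist x0 y0" "norm y0 \<le> norm x0 + dist x0 y0"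
    using norm_triangle_ineq2[of x0 y0] norm_triangle_ineq2[of y0 x0]
    by (simp_all add: dist_norm norm_minus_commute)
  ultimately show ?thesis
    using that assms by (cases "2 * R < dist x0 y0") linarith+
qed

lemma homotopic_paths_polyline_null_if_far:
  assumes w: "in_T w" and b: "b \<in> base_lattice"
    and far: "5 * real (length w) < norm (fst b) \<or> 5 * real (length w) < norm (snd b)"
  shows "homotopic_paths punctured_conf2 (polyline b (map disp w)) (linepath b b)"
proof -
  obtain x0 y0 where b_eq: "b = (x0, y0)" by (cases b)
  define p where "p = polyline b (map disp w)"
  have x0: "x0 \<in> shifted_lattice (1/3)" and y0: "y0 \<in> shifted_lattice (-1/3)"
    using b b_eq by (auto simp: base_lattice_def)
  have p: "path p" "path_image p \<subseteq> punctured_conf2" "pathstart p = (x0, y0)" "pathfinish p = (x0, y0)"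
    using path_image_polyline_disp_subset[OF b] sum_list_disp_eq_0[OF w] by (simp_all add: p_def b_eq)
  have bound: "dist (fst (p t)) x0 \<le> length w \<and> dist (snd (p t)) y0 \<le> length w"
    if "t \<in> {0..1}" for t
    using dist_polyline_disp_le[OF that, of b w] by (simp add: p_def b_eq)
  note null = in_T_projections_null[OF w b, folded p_def, unfolded b_eq fst_conv snd_conv]
  have grids: "0 \<notin> grid_lines (1/3)" "0 \<notin> grid_lines (-1/3)" "0 \<notin> grid_lines (2/3)"
    "y0 \<notin> grid_lines (1/3)" "x0 \<notin> grid_lines (-1/3)"
    by (intro zero_notin_grid_lines shifted_lattice_disjoint_grid_lines[OF _ x0]
          shifted_lattice_disjoint_grid_lines[OF _ y0] notin_Ints_if_abs_less1; simp)+
  have far': "5 * real (length w) < norm x0 \<or> 5 * real (length w) < norm y0"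
    using far by (simp add: b_eq)
  have "homotopic_paths punctured_conf2 p (linepath (x0, y0) (x0, y0))"
  proof (rule far_base_point_cases[OF _ far'])
    show "0 \<le> real (length w)" by simp
  next
    assume "real (length w) < norm x0" "2 * real (length w) < dist x0 y0"
    from p bound this null(2) grids(2,5) show ?thesis by (rule homotopic_paths_null_if_fst_far)
  next
    assume "real (length w) < norm y0" "2 * real (length w) < dist x0 y0"
    from p bound this null(1) grids(1,4) show ?thesis by (rule homotopic_paths_null_if_snd_far)
  next
    assume "real (length w) < norm x0" "real (length w) < norm y0"
      "dist x0 y0 + 2 * real (length w) < norm (x0 + y0)"
    from p bound this null(3) grids(3) show ?thesis by (rule homotopic_paths_null_if_sum_far)
  qed
  then show ?thesis by (simp add: p_def b_eq)
qed

section \<open>Finiteness, conjugation and products\<close>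

lemma finite_bounded_gauss_ints: "finite {z \<in> gauss_ints. norm z \<le> K}"
proof -
  define k where "k = \<lceil>K\<rceil>"
  have "{z \<in> gauss_ints. norm z \<le> K}
          \<subseteq> (\<lambda>(m, n). Complex (of_int m) (of_int n)) ` ({-k..k} \<times> {-k..k})"
  proof
    fix z assume z: "z \<in> {z \<in> gauss_ints. norm z \<le> K}"
    then obtain m n where mn: "Re z = of_int m" "Im z = of_int n"
      by (auto simp: gauss_ints_def elim!: Ints_cases)
    have "\<bar>of_int m\<bar> \<le> K" "\<bar>of_int n\<bar> \<le> K"
      using z mn abs_Re_le_cmod[of z] abs_Im_le_cmod[of z] by auto
    then have "m \<in> {-k..k}" "n \<in> {-k..k}"
      unfolding k_def by (auto simp: abs_le_iff; linarith)+
    moreover have "z = Complex (of_int m) (of_int n)"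
      using mn by (simp add: complex_eq_iff)
    ultimately show "z \<in> (\<lambda>(m, n). Complex (of_int m) (of_int n)) ` ({-k..k} \<times> {-k..k})"
      by force
  qed
  then show ?thesis by (rule finite_subset) simp
qed

lemma finite_I_set:
  assumes "in_T w"
  shows "finite (I_set w)"
proof -
  define B where "B = {z \<in> gauss_ints. norm z \<le> 5 * real (length w) + 1}"
  have "I_set w \<subseteq> B \<times> B"
  proof
    fix q assume "q \<in> I_set w"
    then obtain px py where q: "q = (px, py)" and g: "px \<in> gauss_ints" "py \<in> gauss_ints"
      and nt: "I_nontrivial px py w"
      by (auto simp: I_set_def)
    let ?b = "base_pt px py" and ?\<kappa> = "1/3 + \<i>/3 :: complex"
    have "norm (fst ?b) \<le> 5 * real (length w)" "norm (snd ?b) \<le> 5 * real (length w)"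
      using nt homotopic_paths_polyline_null_if_far[OF assms base_pt_in_base_lattice[OF g]]
      unfolding I_nontrivial_iff_polyline[OF g] by force+
    moreover have "norm ?\<kappa> \<le> 1"
      using norm_triangle_ineq[of "1/3 :: complex" "\<i>/3"] by (simp add: norm_divide)
    moreover have "px = fst ?b + ?\<kappa>" "py = snd ?b - ?\<kappa>"
      by (simp_all add: base_pt_def)
    ultimately have "norm px \<le> 5 * real (length w) + 1" "norm py \<le> 5 * real (length w) + 1"
      using norm_triangle_ineq[of "fst ?b" ?\<kappa>] norm_triangle_ineq4[of "snd ?b" ?\<kappa>] by simp_all
    then show "q \<in> B \<times> B" using q g by (simp add: B_def)
  qed
  moreover have "finite (B \<times> B)"
    unfolding B_def using finite_bounded_gauss_ints by blast
  ultimately show ?thesis by (rule finite_subset)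
qed

lemma homotopic_loops_null_iff:
  assumes "homotopic_loops S p q"
  shows "homotopic_paths S p (linepath (pathstart p) (pathstart p))
     \<longleftrightarrow> homotopic_paths S q (linepath (pathstart q) (pathstart q))"
proof -
  have loops: "pathfinish p = pathstart p" "pathfinish q = pathstart q"
    using homotopic_loops_imp_loop[OF assms] homotopic_loops_imp_loop[OF homotopic_loops_sym[OF assms]]
    by simp_all
  have "homotopic_paths S q' (linepath (pathstart q') (pathstart q'))"
    if "homotopic_loops S p' q'" "pathfinish p' = pathstart p'"
      and "homotopic_paths S p' (linepath (pathstart p') (pathstart p'))" for p' q'
  proof -
    have "homotopic_loops S p' (linepath (pathstart p') (pathstart p'))"
      using that(2,3) by (intro homotopic_paths_imp_homotopic_loops) simp_all
    then have "homotopic_loops S q' (linepath (pathstart p') (pathstart p'))"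
      using that(1) homotopic_loops_sym homotopic_loops_trans by blast
    then show ?thesis by (rule homotopic_loops_imp_homotopic_paths_null)
  qed
  then show ?thesis
    using assms homotopic_loops_sym loops by blast
qed

lemma I_nontrivial_append:
  assumes "in_T w1" and g: "px \<in> gauss_ints" "py \<in> gauss_ints"
    and "I_nontrivial px py (w1 @ w2)"
  shows "I_nontrivial px py w1 \<or> I_nontrivial px py w2"
proof (rule ccontr)
  let ?b = "base_pt px py"
  assume "\<not> ?thesis"
  then have null: "homotopic_paths punctured_conf2 (polyline ?b (map disp w1)) (linepath ?b ?b)"
    "homotopic_paths punctured_conf2 (polyline ?b (map disp w2)) (linepath ?b ?b)"
    unfolding I_nontrivial_iff_polyline[OF g] by auto
  have "path_image (polyline ?b (map disp w1 @ map disp w2)) \<subseteq> punctured_conf2"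
    using path_image_polyline_disp_subset[OF base_pt_in_base_lattice[OF g], of "w1 @ w2"] by simp
  from homotopic_paths_polyline_append[OF this]
  have "homotopic_paths punctured_conf2 (polyline ?b (map disp (w1 @ w2)))
      (polyline ?b (map disp w1) +++ polyline ?b (map disp w2))"
    using sum_list_disp_eq_0[OF assms(1)] by simp
  also have "homotopic_paths punctured_conf2 \<dots> (linepath ?b ?b +++ linepath ?b ?b)"
    using null sum_list_disp_eq_0[OF assms(1)] by (intro homotopic_paths_join) auto
  also have "homotopic_paths punctured_conf2 \<dots> (linepath ?b ?b)"
    using homotopic_paths_imp_subset[OF null(1)] by (intro homotopic_paths_lid') auto
  finally show False
    using assms(4) unfolding I_nontrivial_iff_polyline[OF g] by simp
qed

lemma map_disp_word_inv: "map disp (word_inv \<alpha>) = rev (map uminus (map disp \<alpha>))"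
proof -
  have "disp (g, \<not> e) = - disp (g, e)" for g e by (cases g) (simp_all add: sgnb_def)
  then show ?thesis by (auto simp: word_inv_def rev_map)
qed

lemma fst_sum_list: "fst (sum_list xs) = sum_list (map fst xs)"
  by (induction xs) simp_all

lemma snd_sum_list: "snd (sum_list xs) = sum_list (map snd xs)"
  by (induction xs) simp_all

lemma gauss_ints_diff_iff:
  assumes "c \<in> gauss_ints"
  shows "z - c \<in> gauss_ints \<longleftrightarrow> z \<in> gauss_ints"
  using assms Ints_add[of "Re z - Re c" "Re c"] Ints_add[of "Im z - Im c" "Im c"]
    Ints_diff[of "Re z" "Re c"] Ints_diff[of "Im z" "Im c"]
  by (auto simp: gauss_ints_def)

lemma sum_list_in_gauss_ints: "set vs \<subseteq> gauss_ints \<Longrightarrow> sum_list vs \<in> gauss_ints"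
  by (induction vs) (simp_all add: gauss_ints_def)

lemma sum_disp_in_gauss_ints:
  "fst (sum_list (map disp \<alpha>)) \<in> gauss_ints" "snd (sum_list (map disp \<alpha>)) \<in> gauss_ints"
proof -
  have "unit_steps \<subseteq> gauss_ints" by (auto simp: unit_steps_def gauss_ints_def)
  then have "fst (disp a) \<in> gauss_ints" "snd (disp a) \<in> gauss_ints" for a
    using disp_components_in_unit_steps by blast+
  then show "fst (sum_list (map disp \<alpha>)) \<in> gauss_ints" "snd (sum_list (map disp \<alpha>)) \<in> gauss_ints"
    by (auto simp: fst_sum_list snd_sum_list intro!: sum_list_in_gauss_ints)
qed

lemma homotopic_loops_polyline_conjugate:
  assumes S: "path_image (polyline b (rev (map uminus us) @ vs @ us)) \<subseteq> S"
    and vs: "sum_list vs = 0"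
  shows "homotopic_loops S (polyline b (rev (map uminus us) @ vs @ us)) (polyline (b - sum_list us) vs)"
proof -
  let ?b' = "b - sum_list us"
  define Q where "Q = rev (map uminus us)"
  define q where "q = polyline b Q"
  define \<gamma> where "\<gamma> = polyline ?b' vs"
  define r where "r = polyline ?b' us"
  have sum_Q: "sum_list Q = - sum_list us"
    unfolding Q_def by (simp only: sum_list_rev sum_list_map_uminus)
  have b': "b + sum_list Q = ?b'" "?b' + sum_list us = b" "?b' + sum_list vs = ?b'"
    unfolding sum_Q using vs by simp_all
  from S have img: "path_image q \<subseteq> S" "path_image (polyline ?b' (vs @ us)) \<subseteq> S"
    "path_image \<gamma> \<subseteq> S" "path_image r \<subseteq> S"
    by (auto simp: path_image_polyline_append q_def \<gamma>_def r_def Q_def[symmetric] b')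
  have "homotopic_paths S (polyline b (Q @ vs @ us)) (q +++ polyline ?b' (vs @ us))"
    using homotopic_paths_polyline_append[OF S[folded Q_def]] by (simp add: q_def b')
  also have "homotopic_paths S \<dots> (q +++ (\<gamma> +++ r))"
    using homotopic_paths_polyline_append[OF img(2)] img(1)
    by (intro homotopic_paths_join) (simp_all add: q_def \<gamma>_def r_def b')
  also have "homotopic_paths S \<dots> (q +++ (\<gamma> +++ reversepath q))"
  proof -
    have "homotopic_paths S (reversepath r) q"
      using homotopic_paths_reversepath_polyline[OF img(4)[unfolded r_def]]
      by (simp add: r_def q_def b' Q_def)
    then have "homotopic_paths S r (reversepath q)"
      using homotopic_paths_reversepath_D by fastforce
    then show ?thesis
      using img(1,3) by (intro homotopic_paths_join) (simp_all add: q_def \<gamma>_def r_def b')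
  qed
  finally have "homotopic_loops S (polyline b (Q @ vs @ us)) (q +++ (\<gamma> +++ reversepath q))"
    by (rule homotopic_paths_imp_homotopic_loops) (simp_all add: q_def \<gamma>_def b' add.assoc[symmetric])
  moreover have "homotopic_loops S (q +++ (\<gamma> +++ reversepath q)) \<gamma>"
    using img(1,3) by (intro homotopic_loops_conjugate) (simp_all add: q_def \<gamma>_def b')
  ultimately show ?thesis
    unfolding Q_def \<gamma>_def by (rule homotopic_loops_trans)
qed

lemma I_nontrivial_conj:
  fixes \<alpha> :: word
  defines "s \<equiv> sum_list (map disp \<alpha>)"
  assumes w: "in_T w" and g: "px \<in> gauss_ints" "py \<in> gauss_ints"
  shows "I_nontrivial px py (word_inv \<alpha> @ w @ \<alpha>) \<longleftrightarrow> I_nontrivial (px - fst s) (py - snd s) w"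
proof -
  have g': "px - fst s \<in> gauss_ints" "py - snd s \<in> gauss_ints"
    using g unfolding s_def by (simp_all add: gauss_ints_diff_iff sum_disp_in_gauss_ints)
  have img: "path_image (polyline (base_pt px py) (rev (map uminus (map disp \<alpha>)) @ map disp w @ map disp \<alpha>))
      \<subseteq> punctured_conf2"
    using path_image_polyline_disp_subset[OF base_pt_in_base_lattice[OF g], of "word_inv \<alpha> @ w @ \<alpha>"]
    by (simp only: map_append map_disp_word_inv)
  have e: "base_pt px py - sum_list (map disp \<alpha>) = base_pt (px - fst s) (py - snd s)"
    by (simp add: s_def base_pt_def prod_eq_iff)
  have "homotopic_loops punctured_conf2
      (polyline (base_pt px py) (rev (map uminus (map disp \<alpha>)) @ map disp w @ map disp \<alpha>))
      (polyline (base_pt (px - fst s) (py - snd s)) (map disp w))"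
    using homotopic_loops_polyline_conjugate[OF img sum_list_disp_eq_0[OF w], unfolded e] .
  then have "homotopic_loops punctured_conf2 (polyline (base_pt px py) (map disp (word_inv \<alpha> @ w @ \<alpha>)))
      (polyline (base_pt (px - fst s) (py - snd s)) (map disp w))"
    by (simp only: map_append map_disp_word_inv)
  from homotopic_loops_null_iff[OF this] show ?thesis
    unfolding I_nontrivial_iff_polyline[OF g] I_nontrivial_iff_polyline[OF g'] by simp
qed

lemma I_set_conj:
  assumes "in_T w"
  shows "I_set (word_inv \<alpha> @ w @ \<alpha>) = (\<lambda>q. q + sum_list (map disp \<alpha>)) ` I_set w"
proof -
  define s where "s = sum_list (map disp \<alpha>)"
  have "q \<in> I_set (word_inv \<alpha> @ w @ \<alpha>) \<longleftrightarrow> q - s \<in> I_set w" for q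
  proof -
    obtain px py where q: "q = (px, py)" by (cases q)
    have gs: "px \<in> gauss_ints \<longleftrightarrow> px - fst s \<in> gauss_ints"
      "py \<in> gauss_ints \<longleftrightarrow> py - snd s \<in> gauss_ints"
      unfolding s_def by (simp_all add: gauss_ints_diff_iff sum_disp_in_gauss_ints)
    have "I_nontrivial px py (word_inv \<alpha> @ w @ \<alpha>) \<longleftrightarrow> I_nontrivial (px - fst s) (py - snd s) w"
      if "px \<in> gauss_ints" "py \<in> gauss_ints"
      using I_nontrivial_conj[OF assms that] by (simp only: s_def)
    moreover have "q - s = (px - fst s, py - snd s)" by (simp add: q prod_eq_iff)
    ultimately show ?thesis
      using gs unfolding \<open>q - s = _\<close> unfolding q I_set_def mem_Collect_eq case_prod_conv by blast
  qed
  then have "I_set (word_inv \<alpha> @ w @ \<alpha>) = {q. q - s \<in> I_set w}" by blast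
  also have "\<dots> = (\<lambda>q. q + s) ` I_set w"
  proof (intro equalityI subsetI)
    fix q assume "q \<in> {q. q - s \<in> I_set w}"
    then show "q \<in> (\<lambda>q. q + s) ` I_set w" by (intro image_eqI[of _ _ "q - s"]) simp_all
  qed auto
  finally show ?thesis by (simp add: s_def)
qed

theorem lemma4p13:
  fixes w1 w2 \<alpha> :: word
  assumes "in_T w1" and "in_T w2"
  shows "finite (I_set w1)
         \<and> braid_inv (word_inv \<alpha> @ w1 @ \<alpha>) = braid_inv w1
         \<and> braid_inv (w1 @ w2) \<le> braid_inv w1 + braid_inv w2"
proof (intro conjI)
  show "finite (I_set w1)" using assms(1) by (rule finite_I_set)
  show "braid_inv (word_inv \<alpha> @ w1 @ \<alpha>) = braid_inv w1"
    unfolding braid_inv_def I_set_conj[OF assms(1)] by (simp add: card_image)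
  have "I_set (w1 @ w2) \<subseteq> I_set w1 \<union> I_set w2"
    using I_nontrivial_append[OF assms(1)] by (auto simp: I_set_def)
  then have "braid_inv (w1 @ w2) \<le> card (I_set w1 \<union> I_set w2)"
    unfolding braid_inv_def using assms by (intro card_mono) (simp_all add: finite_I_set)
  also have "\<dots> \<le> braid_inv w1 + braid_inv w2"
    unfolding braid_inv_def by (rule card_Un_le)
  finally show "braid_inv (w1 @ w2) \<le> braid_inv w1 + braid_inv w2" .
qed

end
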